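(* For $\varepsilon\ge0$ let $\psi_\varepsilon(a,b)=a+b-\sqrt{a^2+b^2+2\varepsilon^2}$, $\Psi_\varepsilon(y,z)=(\psi_\varepsilon(y_1,z_1),\dots,\psi_\varepsilon(y_p,z_p))$ for $y,z\in\mathbb R^p$, and $\Theta(\varepsilon)=\{(y,z)\in\mathbb R^p\times\mathbb R^p:\Psi_\varepsilon(y,z)=0\}$. Then $\lim_{\varepsilon\searrow0}\Theta(\varepsilon)=\Theta(0)$ in the sense of Painlevé–Kuratowski set convergence, where $\Theta(0)=\{(y,z):0\le y\perp z\ge0\}$.
   Context: Painlevé–Kuratowski convergence means $\limsup_{\varepsilon\searrow0}\Theta(\varepsilon)\subset\Theta(0)\subset\liminf_{\varepsilon\searrow0}\Theta(\varepsilon)$ (outer and inner limits of sets). *)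

theory Defs
  imports "HOL-Analysis.Analysis"
begin

definition psi :: "real \<Rightarrow> real \<Rightarrow> real \<Rightarrow> real" where
  "psi eps a b = a + b - sqrt (a\<^sup>2 + b\<^sup>2 + 2 * eps\<^sup>2)"

definition Psi :: "real \<Rightarrow> real^'p \<Rightarrow> real^'p \<Rightarrow> real^'p" where
  "Psi eps y z = (\<chi> i. psi eps (y $ i) (z $ i))"

definition Theta :: "real \<Rightarrow> ((real^'p) \<times> (real^'p)) set" where
  "Theta eps = {(y, z). Psi eps y z = 0}"

definition outer_limit_right0 :: "(real \<Rightarrow> 'a::metric_space set) \<Rightarrow> 'a set" where
  "outer_limit_right0 S = {x. \<exists>e xs. (\<forall>k. e k > 0) \<and> e \<longlonglongrightarrow> 0 \<and>
       (\<forall>k. xs k \<in> S (e k)) \<and> xs \<longlonglongrightarrow> x}"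

definition inner_limit_right0 :: "(real \<Rightarrow> 'a::metric_space set) \<Rightarrow> 'a set" where
  "inner_limit_right0 S = {x. \<forall>e. (\<forall>k. e k > 0) \<and> e \<longlonglongrightarrow> 0 \<longrightarrow>
       (\<exists>xs. (\<forall>\<^sub>F k in sequentially. xs k \<in> S (e k)) \<and> xs \<longlonglongrightarrow> x)}"

end

theory Submission
  imports Defs
begin

text \<open>Outer limit: Theta has a closed graph in (eps, y, z), since Psi is jointly continuous,
  so limits of points of Theta(eps_k) with eps_k \<rightarrow> 0 lie in Theta(0).
  Inner limit: for 0 \<le> a \<perp> b \<ge> 0 put d = a - b; the point of the curve psi_eps = 0 whose
  coordinates differ by d depends continuously on eps and equals (a, b) at eps = 0.
  Theta(0) is the complementarity set because psi_0(a, b) = 0 says sqrt(a^2 + b^2) = a + b.\<close>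

lemma outer_limit_right0_subset_if_closed_graph:
  fixes S :: "real \<Rightarrow> 'a::metric_space set"
  assumes "closed {(e, x). x \<in> S e}"
  shows "outer_limit_right0 S \<subseteq> S 0"
proof
  fix x assume "x \<in> outer_limit_right0 S"
  then obtain e xs where e: "e \<longlonglongrightarrow> 0" and xs: "\<And>k. xs k \<in> S (e k)" "xs \<longlonglongrightarrow> x"
    unfolding outer_limit_right0_def by blast
  have "(0, x) \<in> {(e, x). x \<in> S e}"
  proof (rule closed_sequentially[OF assms])
    show "(e k, xs k) \<in> {(e, x). x \<in> S e}" for k
      using xs(1) by simp
    show "(\<lambda>k. (e k, xs k)) \<longlonglongrightarrow> (0, x)"
      using e xs(2) by (rule tendsto_Pair)
  qed
  then show "x \<in> S 0"
    by simp
qed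

lemma inner_limit_right0_if_tendsto_selection:
  fixes S :: "real \<Rightarrow> 'a::metric_space set"
  assumes "\<And>e. e > 0 \<Longrightarrow> g e \<in> S e" and "(g \<longlongrightarrow> x) (at_right 0)"
  shows "x \<in> inner_limit_right0 S"
  unfolding inner_limit_right0_def
proof (intro CollectI allI impI)
  fix e :: "nat \<Rightarrow> real"
  assume e: "(\<forall>k. e k > 0) \<and> e \<longlonglongrightarrow> 0"
  show "\<exists>xs. (\<forall>\<^sub>F k in sequentially. xs k \<in> S (e k)) \<and> xs \<longlonglongrightarrow> x"
  proof (intro exI conjI)
    show "\<forall>\<^sub>F k in sequentially. g (e k) \<in> S (e k)"
      using e assms(1) by (simp add: always_eventually)
    have "filterlim e (at_right 0) sequentially"
      using e by (auto simp: filterlim_at less_imp_neq[symmetric] intro!: always_eventually)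
    then show "(\<lambda>k. g (e k)) \<longlonglongrightarrow> x"
      by (rule filterlim_compose[OF assms(2)])
  qed
qed

lemma psi_zero_eq_0_iff: "psi 0 a b = 0 \<longleftrightarrow> 0 \<le> a \<and> 0 \<le> b \<and> a * b = 0"
proof
  assume "psi 0 a b = 0"
  then have s: "sqrt (a\<^sup>2 + b\<^sup>2) = a + b"
    by (simp add: psi_def)
  then have "a\<^sup>2 + b\<^sup>2 = (a + b)\<^sup>2"
    by (metis add_nonneg_nonneg real_sqrt_pow2 zero_le_power2)
  then have "a * b = 0"
    by (simp add: power2_eq_square algebra_simps)
  moreover have "0 \<le> a + b"
    using s by (metis real_sqrt_ge_zero add_nonneg_nonneg zero_le_power2)
  ultimately show "0 \<le> a \<and> 0 \<le> b \<and> a * b = 0"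
    by auto
next
  assume "0 \<le> a \<and> 0 \<le> b \<and> a * b = 0"
  then show "psi 0 a b = 0"
    by (auto simp: psi_def)
qed

lemma Psi_eq_0_iff: "Psi e y z = 0 \<longleftrightarrow> (\<forall>i. psi e (y $ i) (z $ i) = 0)"
  by (simp add: Psi_def vec_eq_iff)

lemma inner_eq_0_iff_nonneg:
  fixes y z :: "real^'n"
  assumes "\<And>i. 0 \<le> y $ i" and "\<And>i. 0 \<le> z $ i"
  shows "y \<bullet> z = 0 \<longleftrightarrow> (\<forall>i. y $ i * z $ i = 0)"
  unfolding inner_vec_def using assms by (simp add: sum_nonneg_eq_0_iff)

lemma Theta_zero_eq:
  "(Theta 0 :: ((real^'p) \<times> (real^'p)) set) =
     {(y, z). (\<forall>i. 0 \<le> y $ i) \<and> (\<forall>i. 0 \<le> z $ i) \<and> y \<bullet> z = 0}"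
proof -
  have "Psi 0 y z = 0 \<longleftrightarrow> (\<forall>i. 0 \<le> y $ i) \<and> (\<forall>i. 0 \<le> z $ i) \<and> y \<bullet> z = 0"
    for y z :: "real^'p"
    using inner_eq_0_iff_nonneg[of y z] by (auto simp: Psi_eq_0_iff psi_zero_eq_0_iff)
  then show ?thesis
    by (auto simp: Theta_def)
qed

lemma closed_graph_Theta: "closed {(e, x). x \<in> (Theta e :: ((real^'p) \<times> (real^'p)) set)}"
proof -
  have "{(e, x). x \<in> (Theta e :: ((real^'p) \<times> (real^'p)) set)} =
      (\<Inter>i. {(e, y, z). psi e (y $ i) (z $ i) = 0})"
    by (auto simp: Theta_def Psi_eq_0_iff)
  also have "closed \<dots>"
    unfolding psi_def case_prod_unfold
    by (intro closed_INT ballI closed_Collect_eq continuous_intros)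
  finally show ?thesis .
qed

text \<open>(psi_root_fst e d, psi_root_snd e d) is the intersection of the curve psi e a b = 0
  with the line a - b = d.\<close>
definition psi_root_fst :: "real \<Rightarrow> real \<Rightarrow> real" where
  "psi_root_fst e d = (d + sqrt (d\<^sup>2 + 4 * e\<^sup>2)) / 2"

definition psi_root_snd :: "real \<Rightarrow> real \<Rightarrow> real" where
  "psi_root_snd e d = (sqrt (d\<^sup>2 + 4 * e\<^sup>2) - d) / 2"

lemma psi_psi_root: "psi e (psi_root_fst e d) (psi_root_snd e d) = 0"
proof -
  define s where "s = sqrt (d\<^sup>2 + 4 * e\<^sup>2)"
  have "s\<^sup>2 = d\<^sup>2 + 4 * e\<^sup>2"
    by (simp add: s_def)
  then have "(psi_root_fst e d)\<^sup>2 + (psi_root_snd e d)\<^sup>2 + 2 * e\<^sup>2 = s\<^sup>2"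
    unfolding psi_root_fst_def psi_root_snd_def s_def[symmetric]
    by (simp add: power2_eq_square field_simps)
  moreover have "psi_root_fst e d + psi_root_snd e d = s"
    by (simp add: psi_root_fst_def psi_root_snd_def s_def field_simps)
  ultimately show ?thesis
    by (simp add: psi_def s_def)
qed

lemma psi_root_zero_complementary:
  assumes "0 \<le> a" "0 \<le> b" "a * b = 0"
  shows "psi_root_fst 0 (a - b) = a" "psi_root_snd 0 (a - b) = b"
  using assms by (auto simp: psi_root_fst_def psi_root_snd_def)

lemma continuous_psi_root [continuous_intros]:
  "continuous_on UNIV (\<lambda>e. psi_root_fst e d)" "continuous_on UNIV (\<lambda>e. psi_root_snd e d)"
  unfolding psi_root_fst_def psi_root_snd_def by (intro continuous_intros; simp)+

lemma Theta_zero_subset_inner_limit: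
  "Theta 0 \<subseteq> inner_limit_right0 (Theta :: real \<Rightarrow> ((real^'p) \<times> (real^'p)) set)"
proof
  fix x :: "(real^'p) \<times> (real^'p)"
  assume "x \<in> Theta 0"
  then obtain y z where x: "x = (y, z)" and yz: "\<And>i. 0 \<le> y $ i \<and> 0 \<le> z $ i \<and> y $ i * z $ i = 0"
    by (cases x) (auto simp: Theta_def Psi_eq_0_iff psi_zero_eq_0_iff)
  define g where "g e = ((\<chi> i. psi_root_fst e (y $ i - z $ i)) :: real^'p,
                         (\<chi> i. psi_root_snd e (y $ i - z $ i)) :: real^'p)" for e
  have "g e \<in> Theta e" for e
    by (simp add: g_def Theta_def Psi_eq_0_iff psi_psi_root)
  moreover have "continuous_on UNIV g"
    unfolding g_def by (intro continuous_intros continuous_on_vec_lambda)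
  then have "(g \<longlongrightarrow> g 0) (at_right 0)"
    by (simp add: continuous_on_def filterlim_at_split)
  moreover have "g 0 = x"
    using yz by (simp add: g_def x vec_eq_iff psi_root_zero_complementary)
  ultimately show "x \<in> inner_limit_right0 Theta"
    by (intro inner_limit_right0_if_tendsto_selection) auto
qed

theorem lemma4p2:
  shows "outer_limit_right0 (Theta :: real \<Rightarrow> ((real^'p) \<times> (real^'p)) set) \<subseteq> Theta 0
       \<and> Theta 0 \<subseteq> inner_limit_right0 (Theta :: real \<Rightarrow> ((real^'p) \<times> (real^'p)) set)
       \<and> (Theta 0 :: ((real^'p) \<times> (real^'p)) set) =
           {(y, z). (\<forall>i. 0 \<le> y $ i) \<and> (\<forall>i. 0 \<le> z $ i) \<and> y \<bullet> z = 0}"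
  by (intro conjI outer_limit_right0_subset_if_closed_graph closed_graph_Theta
      Theta_zero_subset_inner_limit Theta_zero_eq)

end
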